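(* For every $h\in H$ there exists a unique decomposition $$f_h(\mathbf t_{\mathcal N})=P^+_h(\mathbf t_{\mathcal N})+f^{neg}_h(\mathbf t_{\mathcal N}),$$ where $P^+_h(\mathbf t_{\mathcal N})=\sum_{\beta\in\mathcal B_h}p_\beta\mathbf t_{\mathcal N}^{\beta}$ is a finite sum of monomials (with rational exponents $\beta\in\bigoplus_{n\in\mathcal N}\mathbb Q E_n$) such that every exponent satisfies $\beta\not<0$, and $f^{neg}_h(\mathbf t_{\mathcal N})=R_h(\mathbf t_{\mathcal N})/\prod_{n\in\mathcal N}(1-\mathbf t_{\mathcal N}^{a_n})$ is a rational function having negative degree in $t_n$ for every $n\in\mathcal N$.
   Context: Let $\Gamma$ be a connected plumbing graph which is a tree, all of whose vertices have genus $0$ and an integer decoration $e_v$, such that the intersection matrix $I$ ($I_{vv}=e_v$, $I_{vw}=1$ if $v,w$ are adjacent, $0$ otherwise) is negative definite. Let $\mathcal V$ be its vertex set, $\delta_v$ the valency of $v$, and $\mathcal N=\{v:\delta_v\ge 3\}$ the set of nodes (assumed nonempty). Let $L=\bigoplus_v\mathbb Z E_v$ with the form given by $I$, $L'=\{l'\in L\otimes\mathbb Q:(l',E_v)\in\mathbb Z\ \forall v\}$ with basis $E_v^*$ defined by $(E_v^*,E_w)=-\delta_{vw}$, $H=L'/L$ and $[l']$ the class of $l'$. For $l'=\sum l_vE_v\in L\otimes\mathbb Q$ put $\mathbf t^{l'}=\prod_v t_v^{l_v}$. The zeta-function is $f(\mathbf t)=\prod_{v}(1-\mathbf t^{E_v^*})^{\delta_v-2}$;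 let $Z(\mathbf t)=\sum_{l'\in L'}p_{l'}\mathbf t^{l'}$ be its Taylor expansion at the origin, $Z_h=\sum_{[l']=h}p_{l'}\mathbf t^{l'}$ for $h\in H$, and $f_h(\mathbf t)$ the rational function whose expansion is $Z_h$ (so $f=\sum_h f_h$). Let $\pi_{\mathcal N}:L\otimes\mathbb Q\to\bigoplus_{n\in\mathcal N}\mathbb QE_n$ be the projection forgetting the coordinates of non-nodes, and $\mathbf t_{\mathcal N}^x:=\prod_{n\in\mathcal N}t_n^{x_n}$ where $x_n$ are the coordinates of $\pi_{\mathcal N}(x)$. The reduced zeta-function is $f_h(\mathbf t_{\mathcal N}):=f_h(\mathbf t)|_{t_v=1,\,v\notin\mathcal N}$. It is known that $f_h(\mathbf t_{\mathcal N})=\mathbf t_{\mathcal N}^{r_h}\sum_\ell b_\ell\mathbf t_{\mathcal N}^{\ell}/\prod_{n\in\mathcal N}(1-\mathbf t_{\mathcal N}^{a_n})$ (finite sum, $b_\ell\in\mathbb Z$), where $a_n=\lambda_n\pi_{\mathcal N}(E_n^* )$ with $\lambda_n>0$; all coordinates of $\pi_{\mathcal N}(E_n^* )$ are positive. A rational function $R/\prod_{n}(1-\mathbf t_{\mathcal N}^{a_n})$, with $R$ a finite sum of monomials with rational exponents, has negative degree in $t_n$ if every monomial of $R$ has $t_n$-exponent strictly smaller than the $t_n$-exponent of $\mathbf t_{\mathcal N}^{\sum_{n'}a_{n'}}$. For $\beta=\sum_{n\in\mathcal N}\beta_nE_n$ we write $\beta<0$ if $\beta_n<0$ for all $n$,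 and $\beta\not<0$ otherwise. *)

theory Defs
  imports Complex_Main "HOL-Analysis.Infinite_Sum"
begin

text \<open>Plumbing graph on the finite vertex type 'v, given by an adjacency relation
  adj and integer decorations e (all genera are 0, so no genus data is needed).\<close>

definition valency :: "('v::finite \<Rightarrow> 'v \<Rightarrow> bool) \<Rightarrow> 'v \<Rightarrow> nat" where
  "valency adj v = card {w. adj v w}"

definition nodes :: "('v::finite \<Rightarrow> 'v \<Rightarrow> bool) \<Rightarrow> 'v set" where
  "nodes adj = {v. valency adj v \<ge> 3}"

definition is_tree :: "('v::finite \<Rightarrow> 'v \<Rightarrow> bool) \<Rightarrow> bool" where
  "is_tree adj \<longleftrightarrow> (\<forall>u w. adj u w \<longrightarrow> adj w u) \<and> (\<forall>u. \<not> adj u u)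
     \<and> (\<forall>u w. adj\<^sup>*\<^sup>* u w)
     \<and> card {{u, w} | u w. adj u w} = card (UNIV :: 'v set) - 1"

definition imat :: "('v::finite \<Rightarrow> 'v \<Rightarrow> bool) \<Rightarrow> ('v \<Rightarrow> int) \<Rightarrow> 'v \<Rightarrow> 'v \<Rightarrow> int" where
  "imat adj e v w = (if v = w then e v else if adj v w then 1 else 0)"

definition neg_definite :: "('v::finite \<Rightarrow> 'v \<Rightarrow> bool) \<Rightarrow> ('v \<Rightarrow> int) \<Rightarrow> bool" where
  "neg_definite adj e \<longleftrightarrow>
     (\<forall>x :: 'v \<Rightarrow> real. x \<noteq> (\<lambda>_. 0) \<longrightarrow> (\<Sum>v\<in>UNIV. \<Sum>w\<in>UNIV. x v * of_int (imat adj e v w) * x w) < 0)"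

text \<open>The bilinear form on L \<otimes> Q; vectors are coordinate functions 'v \<Rightarrow> rat
  w.r.t. the basis E_v.\<close>
definition bform :: "('v::finite \<Rightarrow> 'v \<Rightarrow> bool) \<Rightarrow> ('v \<Rightarrow> int) \<Rightarrow> ('v \<Rightarrow> rat) \<Rightarrow> ('v \<Rightarrow> rat) \<Rightarrow> rat" where
  "bform adj e x y = (\<Sum>v\<in>UNIV. \<Sum>w\<in>UNIV. x v * of_int (imat adj e v w) * y w)"

definition Ebas :: "'v \<Rightarrow> 'v \<Rightarrow> rat" where
  "Ebas v = (\<lambda>w. if w = v then 1 else 0)"

definition Lat :: "('v \<Rightarrow> rat) set" where
  "Lat = {x. \<forall>v. x v \<in> \<int>}"

definition Ldual :: "('v::finite \<Rightarrow> 'v \<Rightarrow> bool) \<Rightarrow> ('v \<Rightarrow> int) \<Rightarrow> ('v \<Rightarrow> rat) set" where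
  "Ldual adj e = {x. \<forall>v. bform adj e x (Ebas v) \<in> \<int>}"

definition Hgrp :: "('v::finite \<Rightarrow> 'v \<Rightarrow> bool) \<Rightarrow> ('v \<Rightarrow> int) \<Rightarrow> ('v \<Rightarrow> rat) set set" where
  "Hgrp adj e = Ldual adj e // {(x, y). x \<in> Ldual adj e \<and> y \<in> Ldual adj e \<and> x - y \<in> Lat}"

definition Estar :: "('v::finite \<Rightarrow> 'v \<Rightarrow> bool) \<Rightarrow> ('v \<Rightarrow> int) \<Rightarrow> 'v \<Rightarrow> 'v \<Rightarrow> rat" where
  "Estar adj e v = (THE x. \<forall>w. bform adj e x (Ebas w) = - (if w = v then 1 else 0))"

text \<open>Coefficient p_{l'} of the Taylor expansion at the origin of
  f(t) = prod_v (1 - t^{E_v^*})^{delta_v - 2}: the coefficient of X^j in (1-X)^m is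
  (-1)^j (m gchoose j).\<close>
definition zcoeff :: "('v::finite \<Rightarrow> 'v \<Rightarrow> bool) \<Rightarrow> ('v \<Rightarrow> int) \<Rightarrow> ('v \<Rightarrow> rat) \<Rightarrow> real" where
  "zcoeff adj e l =
     (\<Sum>j\<in>{j :: 'v \<Rightarrow> nat. (\<lambda>w. \<Sum>v\<in>UNIV. of_nat (j v) * Estar adj e v w) = l}.
        \<Prod>v\<in>UNIV. (-1) ^ j v * (real_of_int (int (valency adj v) - 2) gchoose j v))"

definition monN :: "'v set \<Rightarrow> ('v \<Rightarrow> real) \<Rightarrow> ('v \<Rightarrow> rat) \<Rightarrow> real" where
  "monN N t x = (\<Prod>n\<in>N. t n powr real_of_rat (x n))"

text \<open>Reduced zeta function f_h(t_N), evaluated for t_N in (0,1)^N as the (absolutely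
  convergent) series Z_h with t_v = 1 for all non-nodes.\<close>
definition fred :: "('v::finite \<Rightarrow> 'v \<Rightarrow> bool) \<Rightarrow> ('v \<Rightarrow> int) \<Rightarrow> ('v \<Rightarrow> rat) set \<Rightarrow> ('v \<Rightarrow> real) \<Rightarrow> real" where
  "fred adj e h t = (\<Sum>\<^sub>\<infinity>l\<in>h. zcoeff adj e l * monN (nodes adj) t l)"

definition avec :: "('v::finite \<Rightarrow> 'v \<Rightarrow> bool) \<Rightarrow> ('v \<Rightarrow> int) \<Rightarrow> ('v \<Rightarrow> rat) \<Rightarrow> 'v \<Rightarrow> 'v \<Rightarrow> rat" where
  "avec adj e lam n = (\<lambda>w. if w \<in> nodes adj then lam n * Estar adj e n w else 0)"

definition nodebox :: "'v set \<Rightarrow> ('v \<Rightarrow> real) set" where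
  "nodebox N = {t. \<forall>n\<in>N. 0 < t n \<and> t n < 1}"

end

theory Submission
  imports Defs "HOL-Analysis.Cartesian_Space"
begin

(* The exponents a_n have positive node coordinates: on a tree, the dual vectors E_v^* of a
   negative definite form are strictly positive. Existence: a fraction t^g/D whose exponent g is not
   below A = a_1 + ... + a_k in some coordinate is rewritten, by expanding
   D = sum_S (-1)^|S| t^(a_S), as +-t^(g-A) plus fractions t^(g-A+a_S)/D with S a proper subset of
   the nodes; every coordinate of these exponents is smaller by at least min a_n m, so the
   rewriting terminates. Uniqueness: if P + R/D = 0 with P nonzero, choose a node m at which some
   exponent of P is nonnegative; the monomial of P*D of top degree in t_m has exponent above every
   exponent of R = -P*D in that coordinate, which contradicts the linear independence of the
   monomials t^b on the open unit box. *)

lemma bform_Ebas_right: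
  "bform adj e x (Ebas w) = (\<Sum>v\<in>UNIV. x v * of_int (imat adj e v w))"
  unfolding bform_def Ebas_def by (simp add: if_distrib cong: if_cong)

lemma bform_expand_right:
  "bform adj e x y = (\<Sum>w\<in>UNIV. bform adj e x (Ebas w) * y w)"
  unfolding bform_Ebas_right unfolding bform_def
  by (subst sum.swap) (simp add: sum_distrib_right)

lemma bform_diff_left:
  "bform adj e (x - y) z = bform adj e x z - bform adj e y z"
  unfolding bform_def by (simp add: algebra_simps sum_subtractf)

lemma bform_self_neg:
  assumes "neg_definite adj e" and "x \<noteq> (\<lambda>_. 0)"
  shows "bform adj e x x < 0"
proof -
  have "(\<lambda>v. real_of_rat (x v)) \<noteq> (\<lambda>_. 0)"
    using assms(2) by (auto simp: fun_eq_iff)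
  then have "(\<Sum>v\<in>UNIV. \<Sum>w\<in>UNIV. real_of_rat (x v) * of_int (imat adj e v w) * real_of_rat (x w)) < 0"
    using assms(1) unfolding neg_definite_def by blast
  then have "real_of_rat (bform adj e x x) < 0"
    unfolding bform_def by (simp add: of_rat_sum of_rat_mult)
  then show ?thesis by simp
qed

lemma bform_nondegenerate:
  assumes "neg_definite adj e" and "\<forall>w. bform adj e x (Ebas w) = 0"
  shows "x = (\<lambda>_. 0)"
  using bform_self_neg[OF assms(1)] assms(2) bform_expand_right[of adj e x x] by force

lemma Estar_dual:
  fixes adj :: "'v::finite \<Rightarrow> 'v \<Rightarrow> bool"
  assumes "neg_definite adj e"
  shows "bform adj e (Estar adj e v) (Ebas w) = - (if w = v then 1 else 0)"
proof -
  define M :: "rat^'v^'v" where "M = (\<chi> w u. of_int (imat adj e u w))"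
  have M_apply: "(M *v x) $ w = bform adj e (\<lambda>u. x $ u) (Ebas w)" for x w
    unfolding M_def matrix_vector_mult_def bform_Ebas_right by (simp add: mult.commute)
  have "inj ((*v) M)"
  proof (rule injI)
    fix x y assume "M *v x = M *v y"
    then have "\<forall>w. bform adj e ((\<lambda>u. x $ u) - (\<lambda>u. y $ u)) (Ebas w) = 0"
      by (simp add: bform_diff_left vec_eq_iff flip: M_apply)
    then have "(\<lambda>u. x $ u) - (\<lambda>u. y $ u) = (\<lambda>_. 0)"
      by (rule bform_nondegenerate[OF assms])
    then show "x = y"
      by (simp add: vec_eq_iff fun_eq_iff)
  qed
  then obtain x where x: "M *v x = (\<chi> w. - (if w = v then 1 else 0))"
    using vec.linear_inj_imp_surj[OF matrix_vector_mul_linear_gen] by (metis surjD)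
  let ?dual = "\<lambda>y. \<forall>w. bform adj e y (Ebas w) = - (if w = v then 1 else 0)"
  have dual_x: "?dual (\<lambda>u. x $ u)"
    using x by (simp add: vec_eq_iff flip: M_apply)
  moreover have "y = (\<lambda>u. x $ u)" if "?dual y" for y
  proof -
    have "y - (\<lambda>u. x $ u) = (\<lambda>_. 0)"
      using that dual_x by (intro bform_nondegenerate[OF assms]) (simp add: bform_diff_left)
    then show ?thesis
      by (simp add: fun_eq_iff)
  qed
  ultimately have "?dual (Estar adj e v)"
    unfolding Estar_def by (rule theI)
  then show ?thesis by blast
qed

lemma Estar_nonneg:
  fixes adj :: "'v::finite \<Rightarrow> 'v \<Rightarrow> bool"
  assumes "neg_definite adj e"
  shows "Estar adj e v w \<ge> 0"
proof -
  txt \<open>For the negative part z of x = E_v^*, (x, z) = -z_v <= 0 while (p, z) >= 0, because the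
    off-diagonal entries are nonnegative and p, z have disjoint supports; so (z, z) >= 0.\<close>
  define x where "x = Estar adj e v"
  define z where "z = (\<lambda>u. max (- x u) 0)"
  define p where "p = (\<lambda>u. max (x u) 0)"
  have "x = p - z"
    by (auto simp: fun_eq_iff p_def z_def)
  have "bform adj e x z = (\<Sum>w\<in>UNIV. - (if w = v then 1 else 0) * z w)"
    by (subst bform_expand_right) (simp only: x_def Estar_dual[OF assms])
  also have "\<dots> = - z v"
    by (simp add: sum_negf if_distrib[of "\<lambda>c. c * _"] cong: if_cong)
  finally have "bform adj e x z = - z v" .
  moreover have "0 \<le> p u * of_int (imat adj e u w) * z w" for u w
  proof (cases "u = w")
    case True
    then show ?thesis
      by (simp add: p_def z_def max_def)
  next
    case False
    then show ?thesis
      by (intro mult_nonneg_nonneg) (simp_all add: imat_def p_def z_def)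
  qed
  then have "bform adj e p z \<ge> 0"
    unfolding bform_def by (intro sum_nonneg)
  moreover have "z v \<ge> 0"
    by (simp add: z_def)
  ultimately have "bform adj e z z \<ge> 0"
    using bform_diff_left[of adj e p z z] unfolding \<open>x = p - z\<close>[symmetric] by linarith
  then have "z = (\<lambda>_. 0)"
    using bform_self_neg[OF assms, of z] by (metis not_le)
  then have "max (- x w) 0 = 0"
    unfolding z_def by metis
  then show ?thesis
    unfolding x_def by linarith
qed

lemma Estar_pos:
  fixes adj :: "'v::finite \<Rightarrow> 'v \<Rightarrow> bool"
  assumes tree: "is_tree adj" and nd: "neg_definite adj e"
  shows "Estar adj e v w > 0"
proof -
  define x where "x = Estar adj e v"
  have x_nonneg: "x u \<ge> 0" for u
    unfolding x_def by (rule Estar_nonneg[OF nd])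
  have balance: "of_int (e u) * x u + (\<Sum>u'\<in>{u'. adj u' u}. x u') = - (if u = v then 1 else 0)" for u
  proof -
    have "(\<Sum>u'\<in>UNIV. x u' * of_int (imat adj e u' u))
        = (\<Sum>u'\<in>UNIV. (if u' = u then of_int (e u) * x u else 0) + (if adj u' u then x u' else 0))"
      using tree by (intro sum.cong) (auto simp: imat_def is_tree_def)
    then show ?thesis
      using Estar_dual[OF nd, of v u] by (simp add: x_def bform_Ebas_right sum.distrib sum.If_cases)
  qed
  have neighbour_sum_nonneg: "(\<Sum>u'\<in>{u'. adj u' u}. x u') \<ge> 0" for u
    by (rule sum_nonneg) (use x_nonneg in auto)
  have zero_spreads: "x u' = 0" if "x u = 0" "adj u u'" for u u'
  proof -
    have "(\<Sum>u''\<in>{u''. adj u'' u}. x u'') = 0"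
      using balance[of u] neighbour_sum_nonneg[of u] that(1) by (auto split: if_splits)
    moreover have "adj u' u"
      using tree that(2) unfolding is_tree_def by blast
    ultimately show ?thesis
      using x_nonneg by (simp add: sum_nonneg_eq_0_iff)
  qed
  show ?thesis
  proof (rule ccontr)
    assume "\<not> Estar adj e v w > 0"
    then have "x w = 0"
      using x_nonneg[of w] by (simp add: x_def)
    have "x u = 0" if "adj\<^sup>*\<^sup>* w u" for u
      using that by (induction rule: rtranclp_induct) (auto intro: zero_spreads \<open>x w = 0\<close>)
    then have "x v = 0"
      using tree unfolding is_tree_def by blast
    then show False
      using balance[of v] neighbour_sum_nonneg[of v] by simp
  qed
qed

lemma nodebox_pos: "t \<in> nodebox N \<Longrightarrow> n \<in> N \<Longrightarrow> 0 < t n"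
  unfolding nodebox_def by blast

lemma monN_cong: "(\<And>n. n \<in> N \<Longrightarrow> x n = y n) \<Longrightarrow> monN N t x = monN N t y"
  unfolding monN_def by (rule prod.cong) auto

lemma monN_sum:
  assumes "t \<in> nodebox N"
  shows "monN N t (\<lambda>v. \<Sum>i\<in>S. x i v) = (\<Prod>i\<in>S. monN N t (x i))"
  unfolding monN_def of_rat_sum
  using assms by (subst prod.swap) (auto intro!: prod.cong powr_sum dest: nodebox_pos)

lemma monN_add: "monN N t (\<lambda>v. x v + y v) = monN N t x * monN N t y"
  unfolding monN_def by (simp add: of_rat_add powr_add prod.distrib)

lemma monN_upd:
  assumes "finite N" and "m \<in> N"
  shows "monN N (t(m := u)) x = u powr real_of_rat (x m) * monN (N - {m}) t x"
proof -
  have "(\<Prod>n\<in>N - {m}. (t(m := u)) n powr real_of_rat (x n)) = monN (N - {m}) t x"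
    unfolding monN_def by (rule prod.cong) auto
  then show ?thesis
    unfolding monN_def using prod.remove[OF assms, of "\<lambda>n. (t(m := u)) n powr real_of_rat (x n)"]
    by simp
qed

lemma monN_less_1:
  assumes "finite N" "N \<noteq> {}" "t \<in> nodebox N" "\<And>n. n \<in> N \<Longrightarrow> 0 < x n"
  shows "monN N t x < 1"
proof -
  obtain n0 where "n0 \<in> N"
    using assms(2) by blast
  have "t n powr real_of_rat (x n) < 1" if "n \<in> N" for n
    using assms(3,4) that by (auto simp: nodebox_def powr01_less_one)
  then have "(\<Prod>n\<in>N. t n powr real_of_rat (x n)) < (\<Prod>n\<in>N. 1)"
    using \<open>n0 \<in> N\<close> assms(1,3) by (intro prod_mono_strict) (auto simp: less_imp_le dest: nodebox_pos)
  then show ?thesis unfolding monN_def by simp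
qed

lemma powr_tendsto_0_at_right_0: "0 < c \<Longrightarrow> ((\<lambda>u::real. u powr c) \<longlongrightarrow> 0) (at_right 0)"
  by (intro tendsto_zero_powrI tendsto_ident_at tendsto_const)
     (auto simp: eventually_at_right_less less_imp_le intro: eventually_mono[OF eventually_at_right_less])

lemma powr_linear_independent:
  fixes g :: "real \<Rightarrow> real"
  assumes "finite X" and "\<And>u. 0 < u \<Longrightarrow> u < 1 \<Longrightarrow> (\<Sum>x\<in>X. g x * u powr x) = 0"
  shows "\<forall>x\<in>X. g x = 0"
  using assms
proof (induction X rule: finite_linorder_min_induct)
  case empty
  then show ?case by simp
next
  case (insert b X)
  have rest: "(\<Sum>x\<in>X. g x * u powr x) = - g b * u powr b" if "0 < u" "u < 1" for u
  proof -
    have "b \<notin> X"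
      using insert.hyps(2) by blast
    then have "g b * u powr b + (\<Sum>x\<in>X. g x * u powr x) = 0"
      using insert.prems[OF that] insert.hyps(1) by simp
    then show ?thesis
      by linarith
  qed
  have lim: "((\<lambda>u. \<Sum>x\<in>X. g x * u powr (x - b)) \<longlongrightarrow> (\<Sum>x\<in>X. g x * 0)) (at_right 0)"
  proof (rule tendsto_sum, rule tendsto_mult[OF tendsto_const], rule powr_tendsto_0_at_right_0)
    show "0 < x - b" if "x \<in> X" for x
      using insert.hyps(2) that by simp
  qed
  have ev: "\<forall>\<^sub>F u in at_right 0. (\<Sum>x\<in>X. g x * u powr (x - b)) = - g b"
  proof (rule eventually_mono)
    show "\<forall>\<^sub>F u in at_right 0. 0 < u \<and> u < (1::real)"
      unfolding eventually_at_right_field by (intro exI[of _ 1]) auto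
    fix u :: real assume u: "0 < u \<and> u < 1"
    have "(\<Sum>x\<in>X. g x * u powr (x - b)) = (\<Sum>x\<in>X. g x * u powr x) / u powr b"
      by (simp add: powr_diff sum_divide_distrib)
    then show "(\<Sum>x\<in>X. g x * u powr (x - b)) = - g b"
      using rest u by simp
  qed
  have "((\<lambda>_. - g b) \<longlongrightarrow> 0) (at_right (0::real))"
    using lim by (simp add: tendsto_cong[OF ev])
  then have "g b = 0"
    by (simp add: tendsto_const_iff)
  moreover have "\<forall>x\<in>X. g x = 0"
  proof (rule insert.IH)
    fix u :: real assume "0 < u" "u < 1"
    then show "(\<Sum>x\<in>X. g x * u powr x) = 0"
      using rest \<open>g b = 0\<close> by simp
  qed
  ultimately show ?case
    by simp
qed

lemma powr_coeff_eq_0: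
  fixes e :: "'i \<Rightarrow> real"
  assumes "finite I" and "\<And>u. 0 < u \<Longrightarrow> u < 1 \<Longrightarrow> (\<Sum>i\<in>I. c i * u powr e i) = 0"
  shows "(\<Sum>i\<in>{i\<in>I. e i = y}. c i) = 0"
proof -
  have "\<forall>y\<in>e ` I. (\<Sum>i\<in>{i\<in>I. e i = y}. c i) = 0"
  proof (rule powr_linear_independent)
    show "finite (e ` I)"
      using assms(1) by simp
    fix u :: real assume u: "0 < u" "u < 1"
    have "(\<Sum>i\<in>I. c i * u powr e i) = (\<Sum>y\<in>e ` I. \<Sum>i\<in>{i\<in>I. e i = y}. c i * u powr e i)"
      by (rule sum.image_gen[OF assms(1)])
    also have "\<dots> = (\<Sum>y\<in>e ` I. (\<Sum>i\<in>{i\<in>I. e i = y}. c i) * u powr y)"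
      by (auto simp: sum_distrib_right intro!: sum.cong)
    finally show "(\<Sum>y\<in>e ` I. (\<Sum>i\<in>{i\<in>I. e i = y}. c i) * u powr y) = 0"
      using assms(2)[OF u] by simp
  qed
  then show ?thesis
    by (cases "y \<in> e ` I") (blast, auto intro!: sum.neutral)
qed

lemma monN_coeff_eq_0:
  fixes e :: "'i \<Rightarrow> 'v \<Rightarrow> rat"
  assumes "finite N" "finite I" and "\<And>t. t \<in> nodebox N \<Longrightarrow> (\<Sum>i\<in>I. c i * monN N t (e i)) = 0"
  shows "(\<Sum>i\<in>{i\<in>I. \<forall>n\<in>N. e i n = x n}. c i) = 0"
  using assms
proof (induction N arbitrary: I rule: finite_induct)
  case empty
  have "(\<lambda>_. 0) \<in> nodebox {}"
    by (simp add: nodebox_def)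
  then show ?case
    using empty.prems(2) by (simp add: monN_def)
next
  case (insert m N)
  let ?I = "{i\<in>I. e i m = x m}"
  have "(\<Sum>i\<in>?I. c i * monN N t (e i)) = 0" if t: "t \<in> nodebox N" for t
  proof -
    have "(\<Sum>i\<in>{i\<in>I. real_of_rat (e i m) = real_of_rat (x m)}. c i * monN N t (e i)) = 0"
    proof (rule powr_coeff_eq_0[OF insert.prems(1)])
      fix u :: real assume u: "0 < u" "u < 1"
      have "t(m := u) \<in> nodebox (insert m N)"
        using t u by (simp add: nodebox_def)
      then have "(\<Sum>i\<in>I. c i * monN (insert m N) (t(m := u)) (e i)) = 0"
        by (rule insert.prems(2))
      then show "(\<Sum>i\<in>I. c i * monN N t (e i) * u powr real_of_rat (e i m)) = 0"
        using insert.hyps by (simp add: monN_upd mult_ac)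
    qed
    then show ?thesis
      by simp
  qed
  then have "(\<Sum>i\<in>{i\<in>?I. \<forall>n\<in>N. e i n = x n}. c i) = 0"
    using insert.prems(1) by (intro insert.IH) auto
  moreover have "{i\<in>?I. \<forall>n\<in>N. e i n = x n} = {i\<in>I. \<forall>n\<in>insert m N. e i n = x n}"
    by auto
  ultimately show ?case
    by simp
qed

lemma monN_coeff_eq:
  fixes e :: "'i \<Rightarrow> 'v \<Rightarrow> rat" and f :: "'j \<Rightarrow> 'v \<Rightarrow> rat"
  assumes "finite N" "finite I" "finite J"
    and "\<And>t. t \<in> nodebox N \<Longrightarrow> (\<Sum>i\<in>I. c i * monN N t (e i)) = (\<Sum>j\<in>J. d j * monN N t (f j))"
  shows "(\<Sum>i\<in>{i\<in>I. \<forall>n\<in>N. e i n = x n}. c i) = (\<Sum>j\<in>{j\<in>J. \<forall>n\<in>N. f j n = x n}. d j)"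
proof -
  define c' where "c' = case_sum c (\<lambda>j. - d j)"
  define e' where "e' = case_sum e f"
  have "(\<Sum>k\<in>{k\<in>I <+> J. \<forall>n\<in>N. e' k n = x n}. c' k) = 0"
  proof (rule monN_coeff_eq_0[OF assms(1)])
    show "finite (I <+> J)"
      using assms(2,3) by simp
    fix t assume "t \<in> nodebox N"
    then show "(\<Sum>k\<in>I <+> J. c' k * monN N t (e' k)) = 0"
      using assms(2-4) by (simp add: sum.Plus c'_def e'_def o_def sum_negf)
  qed
  moreover have "{k\<in>I <+> J. \<forall>n\<in>N. e' k n = x n}
      = {i\<in>I. \<forall>n\<in>N. e i n = x n} <+> {j\<in>J. \<forall>n\<in>N. f j n = x n}"
    by (auto simp: e'_def)
  ultimately show ?thesis
    using assms(2,3) by (simp add: sum.Plus c'_def o_def sum_negf)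
qed

definition supported :: "'v set \<Rightarrow> ('v \<Rightarrow> rat) \<Rightarrow> bool" where
  "supported N \<beta> \<longleftrightarrow> (\<forall>v. v \<notin> N \<longrightarrow> \<beta> v = 0)"

lemma supported_eqI:
  "supported N \<beta> \<Longrightarrow> supported N \<beta>' \<Longrightarrow> (\<And>n. n \<in> N \<Longrightarrow> \<beta> n = \<beta>' n) \<Longrightarrow> \<beta> = \<beta>'"
  unfolding supported_def by (metis ext)

definition monsum :: "'v set \<Rightarrow> (('v \<Rightarrow> rat) \<Rightarrow> int) \<Rightarrow> ('v \<Rightarrow> real) \<Rightarrow> real" where
  "monsum N P t = (\<Sum>\<beta>\<in>{\<beta>. P \<beta> \<noteq> 0}. of_int (P \<beta>) * monN N t \<beta>)"

lemma monsum_superset: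
  assumes "finite F" "{\<beta>. P \<beta> \<noteq> 0} \<subseteq> F"
  shows "monsum N P t = (\<Sum>\<beta>\<in>F. of_int (P \<beta>) * monN N t \<beta>)"
  unfolding monsum_def by (rule sum.mono_neutral_left) (use assms in auto)

lemma monsum_add:
  assumes "finite {\<beta>. P \<beta> \<noteq> 0}" "finite {\<beta>. Q \<beta> \<noteq> 0}"
  shows "monsum N (\<lambda>\<beta>. P \<beta> + Q \<beta>) t = monsum N P t + monsum N Q t"
proof -
  let ?F = "{\<beta>. P \<beta> \<noteq> 0} \<union> {\<beta>. Q \<beta> \<noteq> 0}"
  have "finite ?F"
    using assms by simp
  then show ?thesis
    by (subst (1 2 3) monsum_superset[of ?F]) (auto simp: sum.distrib distrib_right)
qed

lemma monsum_scale:
  assumes "finite {\<beta>. P \<beta> \<noteq> 0}"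
  shows "monsum N (\<lambda>\<beta>. c * P \<beta>) t = of_int c * monsum N P t"
  using assms
  by (subst (1 2) monsum_superset[of "{\<beta>. P \<beta> \<noteq> 0}"]) (auto simp: sum_distrib_left mult_ac)

lemma monsum_single: "monsum N (\<lambda>\<gamma>. if \<gamma> = \<beta> then 1 else 0) t = monN N t \<beta>"
  by (subst monsum_superset[of "{\<beta>}"]) auto

locale node_exponents =
  fixes N :: "'v set" and a :: "'v \<Rightarrow> 'v \<Rightarrow> rat"
  assumes finite_N: "finite N"
    and a_outside: "\<And>n v. v \<notin> N \<Longrightarrow> a n v = 0"
    and a_pos: "\<And>n m. n \<in> N \<Longrightarrow> m \<in> N \<Longrightarrow> 0 < a n m"
begin

definition asum :: "'v set \<Rightarrow> 'v \<Rightarrow> rat" where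
  "asum S = (\<lambda>m. \<Sum>n\<in>S. a n m)"

definition denom :: "('v \<Rightarrow> real) \<Rightarrow> real" where
  "denom t = (\<Prod>n\<in>N. 1 - monN N t (a n))"

(* P and R are the coefficient functions of the paper's P^+_h and R_h; "negative degree in t_n"
   is the bound asum N n on the exponents of R. *)
definition is_decomposition ::
    "(('v \<Rightarrow> real) \<Rightarrow> real) \<Rightarrow> (('v \<Rightarrow> rat) \<Rightarrow> int) \<Rightarrow> (('v \<Rightarrow> rat) \<Rightarrow> int) \<Rightarrow> bool" where
  "is_decomposition f P R \<longleftrightarrow>
     finite {\<beta>. P \<beta> \<noteq> 0} \<and> finite {\<beta>. R \<beta> \<noteq> 0}
     \<and> (\<forall>\<beta>. P \<beta> \<noteq> 0 \<longrightarrow> supported N \<beta> \<and> \<not> (\<forall>n\<in>N. \<beta> n < 0))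
     \<and> (\<forall>\<beta>. R \<beta> \<noteq> 0 \<longrightarrow> supported N \<beta> \<and> (\<forall>n\<in>N. \<beta> n < asum N n))
     \<and> (\<forall>t\<in>nodebox N. f t = monsum N P t + monsum N R t / denom t)"

definition decomposable :: "(('v \<Rightarrow> real) \<Rightarrow> real) \<Rightarrow> bool" where
  "decomposable f \<longleftrightarrow> (\<exists>P R. is_decomposition f P R)"

lemma supported_asum: "supported N (asum S)"
  unfolding supported_def asum_def by (simp add: a_outside)

lemma asum_gap:
  assumes "S \<subseteq> N" "n \<in> N - S" "m \<in> N"
  shows "a n m \<le> asum N m - asum S m"
proof -
  have "asum N m - asum S m = (\<Sum>n'\<in>N - S. a n' m)"
    unfolding asum_def using assms(1) finite_N by (simp add: sum_diff)
  also have "a n m \<le> \<dots>"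
    using assms finite_N a_pos by (intro member_le_sum) (auto intro: less_imp_le)
  finally show ?thesis .
qed

lemma denom_pos: "t \<in> nodebox N \<Longrightarrow> 0 < denom t"
  unfolding denom_def
  by (rule prod_pos) (auto simp: finite_N a_pos intro!: monN_less_1)

lemma denom_expansion:
  assumes "t \<in> nodebox N"
  shows "denom t = (\<Sum>S\<in>Pow N. (-1) ^ card S * monN N t (asum S))"
proof -
  have "denom t = (\<Prod>n\<in>N. - monN N t (a n) + 1)"
    unfolding denom_def by simp
  also have "\<dots> = (\<Sum>S\<in>Pow N. (\<Prod>n\<in>S. - monN N t (a n)) * (\<Prod>n\<in>N - S. 1))"
    by (rule prod_add[OF finite_N])
  also have "\<dots> = (\<Sum>S\<in>Pow N. (-1) ^ card S * monN N t (asum S))"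
    using assms finite_N
    by (intro sum.cong refl) (auto simp: prod_uminus asum_def monN_sum[OF assms] dest: finite_subset)
  finally show ?thesis .
qed

lemma is_decomposition_add:
  assumes "is_decomposition f P1 R1" "is_decomposition g P2 R2"
  shows "is_decomposition (\<lambda>t. f t + g t) (\<lambda>\<beta>. P1 \<beta> + P2 \<beta>) (\<lambda>\<beta>. R1 \<beta> + R2 \<beta>)"
proof -
  have "{\<beta>. P1 \<beta> + P2 \<beta> \<noteq> 0} \<subseteq> {\<beta>. P1 \<beta> \<noteq> 0} \<union> {\<beta>. P2 \<beta> \<noteq> 0}"
    "{\<beta>. R1 \<beta> + R2 \<beta> \<noteq> 0} \<subseteq> {\<beta>. R1 \<beta> \<noteq> 0} \<union> {\<beta>. R2 \<beta> \<noteq> 0}"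
    by auto
  then show ?thesis
    using assms unfolding is_decomposition_def
    by (auto simp: monsum_add add_divide_distrib intro: finite_subset)
qed

lemma is_decomposition_scale:
  assumes "is_decomposition f P R"
  shows "is_decomposition (\<lambda>t. of_int c * f t) (\<lambda>\<beta>. c * P \<beta>) (\<lambda>\<beta>. c * R \<beta>)"
proof -
  have "{\<beta>. c * P \<beta> \<noteq> 0} \<subseteq> {\<beta>. P \<beta> \<noteq> 0}" "{\<beta>. c * R \<beta> \<noteq> 0} \<subseteq> {\<beta>. R \<beta> \<noteq> 0}"
    by auto
  then show ?thesis
    using assms unfolding is_decomposition_def
    by (auto simp: monsum_scale distrib_left intro: finite_subset)
qed

lemma decomposable_cong:
  "decomposable f \<Longrightarrow> (\<And>t. t \<in> nodebox N \<Longrightarrow> f t = g t) \<Longrightarrow> decomposable g"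
  unfolding decomposable_def is_decomposition_def by simp

lemma decomposable_add: "decomposable f \<Longrightarrow> decomposable g \<Longrightarrow> decomposable (\<lambda>t. f t + g t)"
  unfolding decomposable_def by (blast intro: is_decomposition_add)

lemma decomposable_scale: "decomposable f \<Longrightarrow> decomposable (\<lambda>t. of_int c * f t)"
  unfolding decomposable_def by (blast intro: is_decomposition_scale)

lemma decomposable_sum:
  "finite L \<Longrightarrow> (\<And>l. l \<in> L \<Longrightarrow> decomposable (f l)) \<Longrightarrow> decomposable (\<lambda>t. \<Sum>l\<in>L. of_int (c l) * f l t)"
proof (induction L rule: finite_induct)
  case empty
  have "is_decomposition (\<lambda>t. 0) (\<lambda>_. 0) (\<lambda>_. 0)"
    unfolding is_decomposition_def monsum_def by simp
  then show ?case
    unfolding decomposable_def by auto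
next
  case (insert l L)
  then show ?case
    by (simp add: decomposable_add decomposable_scale)
qed

lemma decomposable_monomial:
  assumes "supported N \<beta>" "\<not> (\<forall>n\<in>N. \<beta> n < 0)"
  shows "decomposable (\<lambda>t. monN N t \<beta>)"
proof -
  have "is_decomposition (\<lambda>t. monN N t \<beta>) (\<lambda>\<gamma>. if \<gamma> = \<beta> then 1 else 0) (\<lambda>_. 0)"
    using assms unfolding is_decomposition_def by (simp add: monsum_single monsum_def)
  then show ?thesis
    unfolding decomposable_def by blast
qed

lemma decomposable_proper_fraction:
  assumes "supported N \<beta>" "\<forall>n\<in>N. \<beta> n < asum N n"
  shows "decomposable (\<lambda>t. monN N t \<beta> / denom t)"
proof -
  have "is_decomposition (\<lambda>t. monN N t \<beta> / denom t) (\<lambda>_. 0) (\<lambda>\<gamma>. if \<gamma> = \<beta> then 1 else 0)"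
    using assms unfolding is_decomposition_def by (simp add: monsum_single monsum_def)
  then show ?thesis
    unfolding decomposable_def by blast
qed

(* Multiply t^(gamma - asum N) by the expanded denominator: its term S = N gives back t^gamma. *)
lemma fraction_reduction:
  fixes \<gamma> :: "'v \<Rightarrow> rat"
  assumes t: "t \<in> nodebox N"
  defines "\<gamma>0 \<equiv> \<lambda>v. \<gamma> v - asum N v"
  shows "monN N t \<gamma> / denom t = of_int ((-1) ^ card N) * monN N t \<gamma>0
    + (\<Sum>S\<in>Pow N - {N}. of_int (- ((-1) ^ (card N + card S))) * (monN N t (\<lambda>v. \<gamma>0 v + asum S v) / denom t))"
proof -
  let ?rest = "\<Sum>S\<in>Pow N - {N}. (-1) ^ card S * monN N t (\<lambda>v. \<gamma>0 v + asum S v)"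
  have "monN N t \<gamma>0 * denom t = (\<Sum>S\<in>Pow N. (-1) ^ card S * monN N t (\<lambda>v. \<gamma>0 v + asum S v))"
    by (simp add: denom_expansion[OF t] sum_distrib_left monN_add mult_ac)
  also have "\<dots> = (-1) ^ card N * monN N t \<gamma> + ?rest"
    using finite_N by (simp add: sum.remove[of "Pow N" N] \<gamma>0_def)
  finally have "monN N t \<gamma> = (-1) ^ card N * (monN N t \<gamma>0 * denom t - ?rest)"
    by (simp add: algebra_simps flip: power_add)
  then show ?thesis
    using denom_pos[OF t]
    by (simp add: field_simps sum_divide_distrib sum_distrib_left power_add sum_negf)
qed

(* Each application of fraction_reduction lowers every coordinate of the exponent by at least
   delta, so induction on the number of steps k needed to get below asum N terminates. *)
lemma decomposable_fraction_bounded: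
  assumes \<delta>: "0 < \<delta>" "\<And>n m. n \<in> N \<Longrightarrow> m \<in> N \<Longrightarrow> \<delta> \<le> a n m"
  shows "supported N \<gamma> \<Longrightarrow> \<forall>m\<in>N. \<gamma> m - asum N m < of_nat k * \<delta>
    \<Longrightarrow> decomposable (\<lambda>t. monN N t \<gamma> / denom t)"
proof (induction k arbitrary: \<gamma>)
  case 0
  then show ?case
    by (intro decomposable_proper_fraction) auto
next
  case (Suc k)
  show ?case
  proof (cases "\<forall>m\<in>N. \<gamma> m < asum N m")
    case True
    then show ?thesis
      using Suc.prems(1) by (rule decomposable_proper_fraction[rotated])
  next
    case False
    define \<gamma>0 where "\<gamma>0 = (\<lambda>v. \<gamma> v - asum N v)"
    have supp0: "supported N \<gamma>0"
      using Suc.prems(1) supported_asum[of N] unfolding supported_def \<gamma>0_def by simp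
    have "decomposable (\<lambda>t. monN N t \<gamma>0)"
      using False supp0 by (intro decomposable_monomial) (auto simp: \<gamma>0_def)
    moreover have "decomposable (\<lambda>t. monN N t (\<lambda>v. \<gamma>0 v + asum S v) / denom t)"
      if S: "S \<in> Pow N - {N}" for S
    proof (rule Suc.IH)
      show "supported N (\<lambda>v. \<gamma>0 v + asum S v)"
        using supp0 supported_asum[of S] unfolding supported_def by simp
      obtain n where n: "n \<in> N - S"
        using S by blast
      show "\<forall>m\<in>N. \<gamma>0 m + asum S m - asum N m < of_nat k * \<delta>"
      proof
        fix m assume m: "m \<in> N"
        have "\<delta> \<le> asum N m - asum S m"
          using \<delta>(2)[of n m] asum_gap[of S n m] S n m by auto
        then show "\<gamma>0 m + asum S m - asum N m < of_nat k * \<delta>"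
          using Suc.prems(2) m by (auto simp: \<gamma>0_def algebra_simps)
      qed
    qed
    ultimately have "decomposable (\<lambda>t. of_int ((-1) ^ card N) * monN N t \<gamma>0
      + (\<Sum>S\<in>Pow N - {N}. of_int (- ((-1) ^ (card N + card S)))
          * (monN N t (\<lambda>v. \<gamma>0 v + asum S v) / denom t)))"
      using finite_N by (intro decomposable_add decomposable_scale decomposable_sum) auto
    then show ?thesis
      by (rule decomposable_cong) (simp add: fraction_reduction \<gamma>0_def)
  qed
qed

lemma decomposable_fraction: "decomposable (\<lambda>t. monN N t \<gamma> / denom t)"
proof -
  define \<gamma>' where "\<gamma>' = (\<lambda>v. if v \<in> N then \<gamma> v else 0)"
  define \<delta> where "\<delta> = Min (insert 1 ((\<lambda>(n, m). a n m) ` (N \<times> N)))"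
  have \<delta>: "0 < \<delta>" "\<And>n m. n \<in> N \<Longrightarrow> m \<in> N \<Longrightarrow> \<delta> \<le> a n m"
    unfolding \<delta>_def using finite_N a_pos by (auto simp: Min_gr_iff intro!: Min_le)
  obtain k :: nat where "Max (insert 0 ((\<lambda>m. \<gamma>' m - asum N m) ` N)) < of_nat k * \<delta>"
    using ex_less_of_nat_mult[OF \<delta>(1)] by blast
  then have "\<forall>m\<in>N. \<gamma>' m - asum N m < of_nat k * \<delta>"
    using finite_N by (auto simp: Max_less_iff)
  moreover have "supported N \<gamma>'"
    unfolding supported_def \<gamma>'_def by simp
  ultimately have "decomposable (\<lambda>t. monN N t \<gamma>' / denom t)"
    using decomposable_fraction_bounded[OF \<delta>] by blast
  then show ?thesis
    by (rule decomposable_cong) (simp add: \<gamma>'_def cong: monN_cong)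
qed

lemma decomposable_quotient:
  assumes "finite {l. b l \<noteq> 0}"
  shows "decomposable (\<lambda>t. monN N t r * (\<Sum>l\<in>{l. b l \<noteq> 0}. of_int (b l) * monN N t l) / denom t)"
proof -
  have "decomposable (\<lambda>t. \<Sum>l\<in>{l. b l \<noteq> 0}. of_int (b l) * (monN N t (\<lambda>v. r v + l v) / denom t))"
    using assms by (intro decomposable_sum decomposable_fraction)
  then show ?thesis
    by (rule decomposable_cong) (simp add: monN_add sum_distrib_left sum_divide_distrib mult_ac)
qed

lemma zero_decomposition_identity:
  assumes d: "is_decomposition (\<lambda>_. 0) P R" and t: "t \<in> nodebox N"
  shows "(\<Sum>i\<in>{\<beta>. P \<beta> \<noteq> 0} \<times> Pow N.
            of_int (P (fst i) * (-1) ^ card (snd i)) * monN N t (\<lambda>v. fst i v + asum (snd i) v))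
       = (\<Sum>\<gamma>\<in>{\<gamma>. R \<gamma> \<noteq> 0}. of_int (- R \<gamma>) * monN N t \<gamma>)"
proof -
  have "monsum N P t * denom t = - monsum N R t"
    using d t denom_pos[OF t] unfolding is_decomposition_def by (auto simp: field_simps)
  moreover have "monsum N P t * denom t
      = (\<Sum>i\<in>{\<beta>. P \<beta> \<noteq> 0} \<times> Pow N.
            of_int (P (fst i) * (-1) ^ card (snd i)) * monN N t (\<lambda>v. fst i v + asum (snd i) v))"
    unfolding monsum_def denom_expansion[OF t] sum_product sum.cartesian_product
    by (intro sum.cong) (auto simp: monN_add)
  ultimately show ?thesis
    unfolding monsum_def by (simp add: sum_negf)
qed

lemma leading_exponent_unique:
  assumes m: "m \<in> N" and "\<beta>0 \<in> F" and top: "\<And>\<beta>. \<beta> \<in> F \<Longrightarrow> \<beta> m \<le> \<beta>0 m"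
    and supp: "\<And>\<beta>. \<beta> \<in> F \<Longrightarrow> supported N \<beta>"
  shows "{i \<in> F \<times> Pow N. \<forall>n\<in>N. fst i n + asum (snd i) n = \<beta>0 n + asum N n} = {(\<beta>0, N)}"
proof (intro equalityI subsetI)
  fix i assume i: "i \<in> {i \<in> F \<times> Pow N. \<forall>n\<in>N. fst i n + asum (snd i) n = \<beta>0 n + asum N n}"
  obtain \<beta> S where i_eq: "i = (\<beta>, S)"
    by (cases i)
  have "S = N"
  proof (rule ccontr)
    assume "S \<noteq> N"
    then obtain n where n: "n \<in> N - S"
      using i i_eq by auto
    have "a n m \<le> asum N m - asum S m"
      using asum_gap[OF _ n m] i i_eq by auto
    moreover have "0 < a n m"
      using a_pos n m by simp
    moreover have "\<beta> m \<le> \<beta>0 m"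
      using top i i_eq by auto
    ultimately have "\<beta> m + asum S m < \<beta>0 m + asum N m"
      by linarith
    then show False
      using i i_eq m by auto
  qed
  moreover have "\<beta> = \<beta>0"
    using supp i i_eq \<open>\<beta>0 \<in> F\<close> \<open>S = N\<close> by (intro supported_eqI) auto
  ultimately show "i \<in> {(\<beta>0, N)}"
    using i_eq by simp
qed (use \<open>\<beta>0 \<in> F\<close> in auto)

lemma zero_decomposition_no_poly_part:
  assumes d: "is_decomposition (\<lambda>_. 0) P R"
  shows "P = (\<lambda>_. 0)"
proof (rule ccontr)
  let ?FP = "{\<beta>. P \<beta> \<noteq> 0}" and ?FR = "{\<gamma>. R \<gamma> \<noteq> 0}"
  have fin: "finite ?FP" "finite ?FR"
    using d by (simp_all add: is_decomposition_def)
  assume "P \<noteq> (\<lambda>_. 0)"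
  then obtain \<beta>1 where "P \<beta>1 \<noteq> 0"
    by auto
  then obtain m where m: "m \<in> N" "0 \<le> \<beta>1 m"
    using d unfolding is_decomposition_def by (auto simp: not_less)
  define \<mu> where "\<mu> = Max ((\<lambda>\<beta>. \<beta> m) ` ?FP)"
  have "\<mu> \<in> (\<lambda>\<beta>. \<beta> m) ` ?FP"
    unfolding \<mu>_def using fin \<open>P \<beta>1 \<noteq> 0\<close> by (intro Max_in) auto
  then obtain \<beta>0 where \<beta>0: "\<beta>0 \<in> ?FP" "\<beta>0 m = \<mu>"
    by auto
  have top: "\<beta> m \<le> \<beta>0 m" if "\<beta> \<in> ?FP" for \<beta>
    unfolding \<beta>0(2) \<mu>_def using fin that by (intro Max_ge) auto
  have "0 \<le> \<beta>0 m"
    using top[of \<beta>1] \<open>P \<beta>1 \<noteq> 0\<close> m(2) by simp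
  txt \<open>Only the term t^(b0) t^(asum N) of P * denom has the exponent x, and in coordinate m
    all exponents of R stay below it.\<close>
  define x where "x = (\<lambda>v. \<beta>0 v + asum N v)"
  have lhs: "{i \<in> ?FP \<times> Pow N. \<forall>n\<in>N. fst i n + asum (snd i) n = x n} = {(\<beta>0, N)}"
    unfolding x_def using d m(1) \<beta>0(1) top
    by (intro leading_exponent_unique) (auto simp: is_decomposition_def)
  have "\<gamma> m < x m" if "R \<gamma> \<noteq> 0" for \<gamma>
  proof -
    have "\<gamma> m < asum N m"
      using d that m(1) unfolding is_decomposition_def by blast
    then show ?thesis
      unfolding x_def using \<open>0 \<le> \<beta>0 m\<close> by linarith
  qed
  then have rhs: "{\<gamma> \<in> ?FR. \<forall>n\<in>N. \<gamma> n = x n} = {}"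
    using m(1) by fastforce
  have "(\<Sum>i\<in>{i \<in> ?FP \<times> Pow N. \<forall>n\<in>N. fst i n + asum (snd i) n = x n}.
          of_int (P (fst i) * (-1) ^ card (snd i)) :: real)
      = (\<Sum>\<gamma>\<in>{\<gamma> \<in> ?FR. \<forall>n\<in>N. \<gamma> n = x n}. of_int (- R \<gamma>))"
    using zero_decomposition_identity[OF d] finite_N fin
    by (intro monN_coeff_eq[where e = "\<lambda>i v. fst i v + asum (snd i) v" and f = "\<lambda>\<gamma>. \<gamma>"]) auto
  then show False
    unfolding lhs rhs using \<beta>0(1) by simp
qed

lemma zero_decomposition_trivial:
  assumes d: "is_decomposition (\<lambda>_. 0) P R"
  shows "P = (\<lambda>_. 0) \<and> R = (\<lambda>_. 0)"
proof
  show P: "P = (\<lambda>_. 0)"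
    by (rule zero_decomposition_no_poly_part[OF d])
  let ?FR = "{\<gamma>. R \<gamma> \<noteq> 0}"
  show "R = (\<lambda>_. 0)"
  proof (rule ccontr)
    assume "R \<noteq> (\<lambda>_. 0)"
    then obtain \<gamma>0 where "R \<gamma>0 \<noteq> 0"
      by auto
    have "{\<gamma> \<in> ?FR. \<forall>n\<in>N. \<gamma> n = \<gamma>0 n} = {\<gamma>0}"
      using d \<open>R \<gamma>0 \<noteq> 0\<close> unfolding is_decomposition_def by (auto intro: supported_eqI)
    moreover have "(\<Sum>\<gamma>\<in>{\<gamma> \<in> ?FR. \<forall>n\<in>N. \<gamma> n = \<gamma>0 n}. of_int (- R \<gamma>) :: real) = 0"
      using zero_decomposition_identity[OF d] d finite_N P
      by (intro monN_coeff_eq_0[where e = "\<lambda>\<gamma>. \<gamma>"]) (auto simp: is_decomposition_def)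
    ultimately show False
      using \<open>R \<gamma>0 \<noteq> 0\<close> by simp
  qed
qed

lemma is_decomposition_unique:
  assumes "is_decomposition f P1 R1" "is_decomposition f P2 R2"
  shows "P1 = P2 \<and> R1 = R2"
proof -
  have "is_decomposition (\<lambda>t. f t + of_int (-1) * f t) (\<lambda>\<beta>. P1 \<beta> + -1 * P2 \<beta>) (\<lambda>\<beta>. R1 \<beta> + -1 * R2 \<beta>)"
    by (intro is_decomposition_add is_decomposition_scale assms)
  then have "is_decomposition (\<lambda>_. 0) (\<lambda>\<beta>. P1 \<beta> - P2 \<beta>) (\<lambda>\<beta>. R1 \<beta> - R2 \<beta>)"
    by simp
  then show ?thesis
    by (auto dest: zero_decomposition_trivial simp: fun_eq_iff)
qed

lemma decomposable_imp_ex1: "decomposable f \<Longrightarrow> \<exists>!(P, R). is_decomposition f P R"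
  unfolding decomposable_def using is_decomposition_unique by blast

end

lemma node_exponents_avec:
  fixes adj :: "'v::finite \<Rightarrow> 'v \<Rightarrow> bool"
  assumes "is_tree adj" "neg_definite adj e" "\<forall>n\<in>nodes adj. 0 < lam n"
  shows "node_exponents (nodes adj) (avec adj e lam)"
proof
  show "finite (nodes adj)"
    by simp
  show "avec adj e lam n v = 0" if "v \<notin> nodes adj" for n v
    using that by (simp add: avec_def)
  show "0 < avec adj e lam n m" if "n \<in> nodes adj" "m \<in> nodes adj" for n m
    using that assms(3) Estar_pos[OF assms(1,2), of n m] by (simp add: avec_def mult_pos_pos)
qed

theorem mainTheorem1:
  fixes adj :: "'v::finite \<Rightarrow> 'v \<Rightarrow> bool" and e :: "'v \<Rightarrow> int" and lam :: "'v \<Rightarrow> rat"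
  assumes tree: "is_tree adj"
    and negdef: "neg_definite adj e"
    and has_node: "nodes adj \<noteq> {}"
    and lam_pos: "\<forall>n\<in>nodes adj. lam n > 0"
    and known: "\<forall>h\<in>Hgrp adj e. \<exists>(r :: 'v \<Rightarrow> rat) (b :: ('v \<Rightarrow> rat) \<Rightarrow> int).
                  finite {l. b l \<noteq> 0} \<and>
                  (\<forall>t\<in>nodebox (nodes adj).
                     fred adj e h t = monN (nodes adj) t r
                       * (\<Sum>l\<in>{l. b l \<noteq> 0}. of_int (b l) * monN (nodes adj) t l)
                       / (\<Prod>n\<in>nodes adj. 1 - monN (nodes adj) t (avec adj e lam n)))"
  shows "\<forall>h\<in>Hgrp adj e. \<exists>!(P, R).
           finite {\<beta>. P \<beta> \<noteq> 0} \<and> finite {\<beta>. R \<beta> \<noteq> 0}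
         \<and> (\<forall>\<beta>. P \<beta> \<noteq> 0 \<longrightarrow> (\<forall>v. v \<notin> nodes adj \<longrightarrow> \<beta> v = 0) \<and> \<not> (\<forall>n\<in>nodes adj. \<beta> n < 0))
         \<and> (\<forall>\<beta>. R \<beta> \<noteq> 0 \<longrightarrow> (\<forall>v. v \<notin> nodes adj \<longrightarrow> \<beta> v = 0)
                \<and> (\<forall>n\<in>nodes adj. \<beta> n < (\<Sum>n'\<in>nodes adj. avec adj e lam n' n)))
         \<and> (\<forall>t\<in>nodebox (nodes adj).
              fred adj e h t
                = (\<Sum>\<beta>\<in>{\<beta>. P \<beta> \<noteq> 0}. of_int (P \<beta>) * monN (nodes adj) t \<beta>)
                + (\<Sum>\<beta>\<in>{\<beta>. R \<beta> \<noteq> 0}. of_int (R \<beta>) * monN (nodes adj) t \<beta>)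
                  / (\<Prod>n\<in>nodes adj. 1 - monN (nodes adj) t (avec adj e lam n)))"
proof -
  interpret node_exponents "nodes adj" "avec adj e lam"
    using tree negdef lam_pos by (rule node_exponents_avec)
  have "\<exists>!(P, R). is_decomposition (fred adj e h) P R" if h: "h \<in> Hgrp adj e" for h
  proof -
    obtain r b where fin: "finite {l. b l \<noteq> 0}"
      and fred_eq: "\<forall>t\<in>nodebox (nodes adj). fred adj e h t = monN (nodes adj) t r
                   * (\<Sum>l\<in>{l. b l \<noteq> 0}. of_int (b l) * monN (nodes adj) t l)
                   / (\<Prod>n\<in>nodes adj. 1 - monN (nodes adj) t (avec adj e lam n))"
      using known h by blast
    have "decomposable (fred adj e h)"
      by (rule decomposable_cong[OF decomposable_quotient[OF fin, where r = r]]) (simp add: fred_eq denom_def)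
    then show ?thesis
      by (rule decomposable_imp_ex1)
  qed
  then show ?thesis
    unfolding is_decomposition_def supported_def monsum_def asum_def denom_def by (rule ballI)
qed

end
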